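(* Every non-abelian free group of finite rank has exponential automorphic growth.
   Context: For a finitely generated group $G$ with finite generating set $\Sigma$, the automorphic growth function sends $n$ to the number of $\operatorname{Aut}(G)$-orbits of $G$ containing an element of word length at most $n$ with respect to $\Sigma$. For non-decreasing non-zero $f,g\colon\mathbb{N}\to\mathbb{N}$ write $f\preccurlyeq g$ if there is $\lambda\in\mathbb{N}\setminus\{0\}$ with $f(n)\le\lambda g(\lambda n+\lambda)+\lambda$ for all $n$, and $f\sim g$ if $f\preccurlyeq g$ and $g\preccurlyeq f$. Exponential automorphic growth means the automorphic growth function is $\sim$-equivalent to $n\mapsto 2^n$; this is independent of the generating set. *)

theory Defs
  imports "HOL-Algebra.Generated_Groups"
begin

text \<open>Letters are pairs (i, b) with i < r; b = True is the generator x_i,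
  b = False its inverse.\<close>

type_synonym fg_word = "(nat \<times> bool) list"

definition cancels :: "nat \<times> bool \<Rightarrow> nat \<times> bool \<Rightarrow> bool" where
  "cancels x y \<longleftrightarrow> fst x = fst y \<and> snd x \<noteq> snd y"

fun reduced :: "fg_word \<Rightarrow> bool" where
  "reduced [] = True"
| "reduced [x] = True"
| "reduced (x # y # zs) = (\<not> cancels x y \<and> reduced (y # zs))"

definition push :: "nat \<times> bool \<Rightarrow> fg_word \<Rightarrow> fg_word" where
  "push x w = (case w of [] \<Rightarrow> [x] | y # ys \<Rightarrow> (if cancels x y then ys else x # w))"

definition reduce :: "fg_word \<Rightarrow> fg_word" where
  "reduce w = foldr push w []"

definition free_group :: "nat \<Rightarrow> fg_word monoid" where
  "free_group r = \<lparr> carrier = {w. reduced w \<and> (\<forall>x \<in> set w. fst x < r)},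
                    mult = (\<lambda>u v. reduce (u @ v)),
                    one = [] \<rparr>"

definition word_length :: "('a, 'b) monoid_scheme \<Rightarrow> 'a set \<Rightarrow> 'a \<Rightarrow> nat" where
  "word_length G S g = (LEAST n. \<exists>ws. length ws = n \<and>
      set ws \<subseteq> S \<union> m_inv G ` S \<and> foldr (\<otimes>\<^bsub>G\<^esub>) ws \<one>\<^bsub>G\<^esub> = g)"

definition aut_orbit :: "('a, 'b) monoid_scheme \<Rightarrow> 'a \<Rightarrow> 'a set" where
  "aut_orbit G g = {\<phi> g | \<phi>. \<phi> \<in> iso G G}"

definition aut_growth :: "('a, 'b) monoid_scheme \<Rightarrow> 'a set \<Rightarrow> nat \<Rightarrow> nat" where
  "aut_growth G S n = card {Orb \<in> aut_orbit G ` carrier G. \<exists>g \<in> Orb. word_length G S g \<le> n}"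

definition growth_le :: "(nat \<Rightarrow> nat) \<Rightarrow> (nat \<Rightarrow> nat) \<Rightarrow> bool" (infix "\<preccurlyeq>\<^sub>g" 50) where
  "f \<preccurlyeq>\<^sub>g g \<longleftrightarrow> (\<exists>c::nat. c \<noteq> 0 \<and> (\<forall>n. f n \<le> c * g (c * n + c) + c))"

definition growth_equiv :: "(nat \<Rightarrow> nat) \<Rightarrow> (nat \<Rightarrow> nat) \<Rightarrow> bool" (infix "\<sim>\<^sub>g" 50) where
  "f \<sim>\<^sub>g g \<longleftrightarrow> f \<preccurlyeq>\<^sub>g g \<and> g \<preccurlyeq>\<^sub>g f"

end

theory Submission
  imports Defs
begin

(* Counting words gives the upper bound. For the lower bound let a, b be the first two
   generators and c = [a, b]. For a bit string e = e_1 ... e_n put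
   w(e) = a c^(e_1) a c^(e_2) ... a c^(e_n) a^(-n), a word of length at most 6n.
   Every homomorphism f from the free group to Z wr Z maps c into the base group, so f(w(e))
   is the lamp configuration sum_j e_j D(t - (j + 1) l), where D = f(c) and l is the cursor
   shift of f(a). For the standard epimorphism (a the shift, b a lamp at 0) this is
   sum_j e_j (delta_(j+2) - delta_(j+1)). If an automorphism maps w(e) to w(e'), composing it
   with the standard epimorphism and comparing the extreme points of both supports forces
   l = 1 and D = delta_1 - delta_0, hence e = e' (or l = -1 and e' is the reverse of e, which
   a suitable framing of the strings excludes). So 2^n framed strings of length n + 4 give
   2^n distinct orbits meeting the ball of radius O(n). *)

lemma growth_le_exp_if_le_power:
  assumes "\<And>n. f n \<le> K ^ n"
  shows "f \<preccurlyeq>\<^sub>g (\<lambda>n. 2 ^ n)"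
  unfolding growth_le_def
proof (intro exI[of _ "K + 1"] conjI allI)
  fix n
  have "K ^ n \<le> (2 ^ K) ^ n" by (rule power_mono) (simp_all add: less_imp_le)
  also have "\<dots> = 2 ^ (K * n)" by (simp add: power_mult)
  also have "\<dots> \<le> 2 ^ ((K + 1) * n + (K + 1))" by (rule power_increasing) simp_all
  also have "\<dots> \<le> (K + 1) * 2 ^ ((K + 1) * n + (K + 1)) + (K + 1)" by simp
  finally show "f n \<le> (K + 1) * 2 ^ ((K + 1) * n + (K + 1)) + (K + 1)"
    using assms[of n] by (rule order_trans[rotated])
qed simp

lemma exp_growth_le_if:
  assumes "\<And>n L. k * (n + 1) \<le> L \<Longrightarrow> 2 ^ n \<le> f L"
  shows "(\<lambda>n. 2 ^ n) \<preccurlyeq>\<^sub>g f"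
  unfolding growth_le_def
proof (intro exI[of _ "k + 1"] conjI allI)
  fix n
  have "2 ^ n \<le> f ((k + 1) * n + (k + 1))" by (rule assms) (simp add: algebra_simps)
  then show "2 ^ n \<le> (k + 1) * f ((k + 1) * n + (k + 1)) + (k + 1)" by (simp add: trans_le_add1)
qed simp

lemma sum_powers_le_Suc_power: "(\<Sum>i\<le>n. (k::nat) ^ i) \<le> (k + 1) ^ n"
proof (induction n)
  case (Suc n)
  have "k ^ Suc n \<le> k * (k + 1) ^ n" by (simp add: mult_le_mono2 power_mono)
  then have "(\<Sum>i\<le>n. k ^ i) + k ^ Suc n \<le> (k + 1) ^ n + k * (k + 1) ^ n"
    using Suc.IH by (rule add_mono[rotated])
  then show ?case by simp
qed simp

context group
begin

lemma foldr_mult_closed: "set ws \<subseteq> carrier G \<Longrightarrow> foldr (\<otimes>) ws \<one> \<in> carrier G"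
  by (induction ws) auto

lemma foldr_mult_append:
  "set u \<subseteq> carrier G \<Longrightarrow> set v \<subseteq> carrier G \<Longrightarrow>
    foldr (\<otimes>) (u @ v) \<one> = foldr (\<otimes>) u \<one> \<otimes> foldr (\<otimes>) v \<one>"
  by (induction u) (auto simp: m_assoc foldr_mult_closed)

lemma generate_word_product:
  assumes S: "S \<subseteq> carrier G" and g: "g \<in> generate G S"
  shows "\<exists>ws. set ws \<subseteq> S \<union> m_inv G ` S \<and> foldr (\<otimes>) ws \<one> = g"
  using g
proof (induction rule: generate.induct)
  case one
  show ?case by (intro exI[of _ "[]"]) simp
next
  case (incl h)
  then show ?case using S by (intro exI[of _ "[h]"]) auto
next
  case (inv h)
  then show ?case using S by (intro exI[of _ "[inv h]"]) auto
next
  case (eng h1 h2)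
  then obtain u v where u: "set u \<subseteq> S \<union> m_inv G ` S" "foldr (\<otimes>) u \<one> = h1"
    and v: "set v \<subseteq> S \<union> m_inv G ` S" "foldr (\<otimes>) v \<one> = h2" by blast
  have "S \<union> m_inv G ` S \<subseteq> carrier G" using S by auto
  then have "foldr (\<otimes>) (u @ v) \<one> = h1 \<otimes> h2"
    using foldr_mult_append[of u v] u v by (metis subset_trans)
  then show ?case using u(1) v(1) by (intro exI[of _ "u @ v"]) auto
qed

lemma word_length_le:
  "set ws \<subseteq> S \<union> m_inv G ` S \<Longrightarrow> foldr (\<otimes>) ws \<one> = g \<Longrightarrow> word_length G S g \<le> length ws"
  unfolding word_length_def by (rule Least_le) blast

lemma word_length_witness:
  assumes "S \<subseteq> carrier G" and "g \<in> generate G S"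
  obtains ws where "length ws = word_length G S g" "set ws \<subseteq> S \<union> m_inv G ` S" "foldr (\<otimes>) ws \<one> = g"
proof -
  obtain ws0 where "set ws0 \<subseteq> S \<union> m_inv G ` S \<and> foldr (\<otimes>) ws0 \<one> = g"
    using generate_word_product[OF assms] by blast
  then have "\<exists>ws. length ws = word_length G S g \<and> set ws \<subseteq> S \<union> m_inv G ` S \<and> foldr (\<otimes>) ws \<one> = g"
    unfolding word_length_def by - (rule LeastI[of _ "length ws0"], blast)
  then show ?thesis using that by blast
qed

lemma word_length_mult_le:
  assumes S: "S \<subseteq> carrier G" and "g \<in> generate G S" and "h \<in> generate G S"
  shows "word_length G S (g \<otimes> h) \<le> word_length G S g + word_length G S h"
proof -
  obtain u where u: "length u = word_length G S g" "set u \<subseteq> S \<union> m_inv G ` S" "foldr (\<otimes>) u \<one> = g"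
    using word_length_witness[OF S \<open>g \<in> generate G S\<close>] .
  obtain v where v: "length v = word_length G S h" "set v \<subseteq> S \<union> m_inv G ` S" "foldr (\<otimes>) v \<one> = h"
    using word_length_witness[OF S \<open>h \<in> generate G S\<close>] .
  have "S \<union> m_inv G ` S \<subseteq> carrier G" using S by auto
  then have "foldr (\<otimes>) (u @ v) \<one> = g \<otimes> h"
    using foldr_mult_append[of u v] u v by (metis subset_trans)
  then have "word_length G S (g \<otimes> h) \<le> length (u @ v)"
    using u(2) v(2) by (intro word_length_le) auto
  then show ?thesis using u(1) v(1) by simp
qed

lemma word_length_foldr_le:
  assumes S: "S \<subseteq> carrier G" and gs: "set gs \<subseteq> generate G S"
  shows "word_length G S (foldr (\<otimes>) gs \<one>) \<le> sum_list (map (word_length G S) gs)"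
  using gs
proof (induction gs)
  case Nil
  show ?case using word_length_le[of "[]"] by simp
next
  case (Cons g gs)
  have "foldr (\<otimes>) gs \<one> \<in> generate G S"
    using Cons.prems by (induction gs) (auto intro: generate.one generate.eng)
  then show ?case
    using word_length_mult_le[OF S, of g "foldr (\<otimes>) gs \<one>"] Cons by fastforce
qed

lemma aut_orbit_self: "g \<in> aut_orbit G g"
  unfolding aut_orbit_def using iso_set_refl by fastforce

lemma aut_orbit_subset_carrier: "h \<in> carrier G \<Longrightarrow> aut_orbit G h \<subseteq> carrier G"
  unfolding aut_orbit_def by (auto intro: hom_in_carrier[OF iso_imp_homomorphism])

lemma aut_orbit_eq:
  assumes h: "h \<in> carrier G" and g: "g \<in> aut_orbit G h"
  shows "aut_orbit G g = aut_orbit G h"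
proof -
  obtain \<phi> where \<phi>: "g = \<phi> h" "\<phi> \<in> iso G G" using g unfolding aut_orbit_def by blast
  define \<phi>' where "\<phi>' = inv_into (carrier G) \<phi>"
  have \<phi>': "\<phi>' \<in> iso G G" unfolding \<phi>'_def using iso_set_sym[OF \<phi>(2)] .
  have "h = \<phi>' g"
    using \<phi> h by (simp add: \<phi>'_def iso_def bij_betw_def)
  have "\<psi> g \<in> aut_orbit G h" if "\<psi> \<in> iso G G" for \<psi>
    using iso_set_trans[OF \<phi>(2) that] \<phi>(1) unfolding aut_orbit_def
    by (auto intro!: exI[of _ "\<psi> \<circ> \<phi>"])
  moreover have "\<psi> h \<in> aut_orbit G g" if "\<psi> \<in> iso G G" for \<psi>
    using iso_set_trans[OF \<phi>' that] \<open>h = \<phi>' g\<close> unfolding aut_orbit_def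
    by (auto intro!: exI[of _ "\<psi> \<circ> \<phi>'"])
  ultimately show ?thesis unfolding aut_orbit_def by blast
qed

lemma aut_orbits_in_ball_subset:
  assumes S: "S \<subseteq> carrier G" and gen: "generate G S = carrier G"
  shows "{Orb \<in> aut_orbit G ` carrier G. \<exists>g\<in>Orb. word_length G S g \<le> n}
    \<subseteq> (\<lambda>ws. aut_orbit G (foldr (\<otimes>) ws \<one>)) ` {ws. set ws \<subseteq> S \<union> m_inv G ` S \<and> length ws \<le> n}"
proof
  fix Orb assume "Orb \<in> {Orb \<in> aut_orbit G ` carrier G. \<exists>g\<in>Orb. word_length G S g \<le> n}"
  then obtain h g where h: "h \<in> carrier G" "Orb = aut_orbit G h"
    and g: "g \<in> Orb" "word_length G S g \<le> n" by blast
  have "g \<in> generate G S" using aut_orbit_subset_carrier[OF h(1)] g(1) h(2) gen by auto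
  then obtain ws where ws: "length ws = word_length G S g" "set ws \<subseteq> S \<union> m_inv G ` S"
    "foldr (\<otimes>) ws \<one> = g"
    using word_length_witness[OF S] by blast
  have "Orb = aut_orbit G (foldr (\<otimes>) ws \<one>)" using aut_orbit_eq[OF h(1)] g(1) h(2) ws(3) by simp
  then show "Orb \<in> (\<lambda>ws. aut_orbit G (foldr (\<otimes>) ws \<one>))
      ` {ws. set ws \<subseteq> S \<union> m_inv G ` S \<and> length ws \<le> n}"
    using ws g(2) by auto
qed

lemma finite_aut_orbits_in_ball:
  assumes "finite S" "S \<subseteq> carrier G" "generate G S = carrier G"
  shows "finite {Orb \<in> aut_orbit G ` carrier G. \<exists>g\<in>Orb. word_length G S g \<le> n}"
  using aut_orbits_in_ball_subset[OF assms(2,3)] finite_lists_length_le[of "S \<union> m_inv G ` S" n]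
    assms(1) by (meson finite_Un finite_imageI finite_subset)

lemma aut_growth_le_power:
  assumes fin: "finite S" and S: "S \<subseteq> carrier G" and gen: "generate G S = carrier G"
  shows "aut_growth G S n \<le> (card (S \<union> m_inv G ` S) + 1) ^ n"
proof -
  let ?L = "{ws. set ws \<subseteq> S \<union> m_inv G ` S \<and> length ws \<le> n}"
  have fin_L: "finite ?L" using fin by (simp add: finite_lists_length_le)
  have "aut_growth G S n \<le> card ((\<lambda>ws. aut_orbit G (foldr (\<otimes>) ws \<one>)) ` ?L)"
    unfolding aut_growth_def using aut_orbits_in_ball_subset[OF S gen] fin_L
    by (intro card_mono) auto
  also have "\<dots> \<le> card ?L" using fin_L by (rule card_image_le)
  also have "\<dots> = (\<Sum>i\<le>n. card (S \<union> m_inv G ` S) ^ i)" using fin by (simp add: card_lists_length_le)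
  also have "\<dots> \<le> (card (S \<union> m_inv G ` S) + 1) ^ n" by (rule sum_powers_le_Suc_power)
  finally show ?thesis .
qed

end

section \<open>The free group on reduced words\<close>

lemma reduced_ConsD: "reduced (x # w) \<Longrightarrow> reduced w"
  by (cases w) auto

lemma reduced_push: "reduced w \<Longrightarrow> reduced (push x w)"
  by (cases w rule: reduced.cases) (auto simp: push_def split: if_splits)

lemma reduced_foldr_push: "reduced acc \<Longrightarrow> reduced (foldr push xs acc)"
  by (induction xs) (auto simp: reduced_push)

lemma reduced_reduce: "reduced (reduce w)"
  unfolding reduce_def by (rule reduced_foldr_push) simp

lemma push_reduced_Cons: "reduced (x # w) \<Longrightarrow> push x w = x # w"
  by (cases w) (auto simp: push_def)

lemma reduce_reduced: "reduced w \<Longrightarrow> reduce w = w"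
proof (induction w)
  case (Cons x w)
  then have "reduce w = w" using reduced_ConsD by blast
  then show ?case using Cons.prems by (simp add: reduce_def push_reduced_Cons)
qed (simp add: reduce_def)

lemma cancels_cancels_eq: "cancels x z \<Longrightarrow> cancels z y \<Longrightarrow> x = y"
  by (cases x; cases y; cases z) (auto simp: cancels_def)

lemma push_push_cancel:
  assumes c: "cancels x z" and v: "reduced v"
  shows "push x (push z v) = v"
proof (cases v)
  case Nil
  then show ?thesis using c by (simp add: push_def)
next
  case (Cons y ys)
  show ?thesis
  proof (cases "cancels z y")
    case True
    then have "x = y" using c cancels_cancels_eq by blast
    have "push y ys = y # ys" using v Cons push_reduced_Cons by simp
    then show ?thesis using True Cons \<open>x = y\<close> by (simp add: push_def)
  next
    case False
    then show ?thesis using c Cons by (simp add: push_def)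
  qed
qed

lemma foldr_push_push:
  assumes y: "reduced y" and acc: "reduced acc"
  shows "foldr push (push x y) acc = push x (foldr push y acc)"
proof (cases y)
  case (Cons z zs)
  show ?thesis
  proof (cases "cancels x z")
    case True
    then have "push x (push z (foldr push zs acc)) = foldr push zs acc"
      using acc reduced_foldr_push push_push_cancel by blast
    then show ?thesis using True Cons by (simp add: push_def)
  qed (simp add: push_def Cons)
qed (simp add: push_def)

lemma foldr_push_reduce: "reduced acc \<Longrightarrow> foldr push (reduce xs) acc = foldr push xs acc"
proof (induction xs)
  case (Cons x xs)
  have "foldr push (reduce (x # xs)) acc = foldr push (push x (reduce xs)) acc"
    by (simp add: reduce_def)
  also have "\<dots> = push x (foldr push (reduce xs) acc)"
    using foldr_push_push reduced_reduce Cons.prems by blast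
  finally show ?case using Cons by simp
qed (simp add: reduce_def)

lemma reduce_append: "reduce (xs @ ys) = foldr push xs (reduce ys)"
  by (simp add: reduce_def)

lemma reduce_reduce_append: "reduce (reduce u @ v) = reduce (u @ v)"
  by (simp add: reduce_append foldr_push_reduce reduced_reduce)

lemma reduce_append_reduce: "reduce (u @ reduce v) = reduce (u @ v)"
  by (simp add: reduce_append reduce_reduced reduced_reduce)

definition letter_inv :: "nat \<times> bool \<Rightarrow> nat \<times> bool" where
  "letter_inv x = (fst x, \<not> snd x)"

definition word_inv :: "fg_word \<Rightarrow> fg_word" where
  "word_inv u = rev (map letter_inv u)"

lemma cancels_letter_inv: "cancels (letter_inv x) x"
  by (simp add: cancels_def letter_inv_def)

lemma reduce_word_inv_append: "reduce (word_inv u @ u) = []"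
proof -
  have "foldr push (word_inv u @ u) acc = acc" if "reduced acc" for acc
  proof (induction u)
    case (Cons x u)
    have "foldr push (word_inv (x # u) @ x # u) acc
        = foldr push (word_inv u) (push (letter_inv x) (push x (foldr push u acc)))"
      by (simp add: word_inv_def)
    also have "\<dots> = foldr push (word_inv u @ u) acc"
      using push_push_cancel[OF cancels_letter_inv] reduced_foldr_push[OF that] by simp
    finally show ?case using Cons.IH by simp
  qed (simp add: word_inv_def)
  then show ?thesis by (simp add: reduce_def)
qed

lemma set_push: "set (push x w) \<subseteq> insert x (set w)"
  by (auto simp: push_def split: list.splits)

lemma set_reduce: "set (reduce xs) \<subseteq> set xs"
proof -
  have "set (foldr push xs []) \<subseteq> set xs"
    by (induction xs) (use set_push in fastforce)+
  then show ?thesis by (simp add: reduce_def)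
qed

lemma reduce_in_free_group: "\<forall>x\<in>set ws. fst x < r \<Longrightarrow> reduce ws \<in> carrier (free_group r)"
  using set_reduce[of ws] reduced_reduce by (auto simp: free_group_def)

lemma letter_in_free_group: "fst x < r \<Longrightarrow> [x] \<in> carrier (free_group r)"
  by (simp add: free_group_def)

lemma free_group_mult [simp]: "x \<otimes>\<^bsub>free_group r\<^esub> y = reduce (x @ y)"
  by (simp add: free_group_def)

lemma free_group_one [simp]: "\<one>\<^bsub>free_group r\<^esub> = []"
  by (simp add: free_group_def)

lemma group_free_group: "group (free_group r)"
proof (rule groupI)
  fix x y assume "x \<in> carrier (free_group r)" "y \<in> carrier (free_group r)"
  then show "x \<otimes>\<^bsub>free_group r\<^esub> y \<in> carrier (free_group r)"
    unfolding free_group_mult by (intro reduce_in_free_group) (auto simp: free_group_def)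
next
  fix x y z
  show "x \<otimes>\<^bsub>free_group r\<^esub> y \<otimes>\<^bsub>free_group r\<^esub> z = x \<otimes>\<^bsub>free_group r\<^esub> (y \<otimes>\<^bsub>free_group r\<^esub> z)"
    by (simp add: reduce_reduce_append reduce_append_reduce)
next
  fix x assume "x \<in> carrier (free_group r)"
  then show "\<one>\<^bsub>free_group r\<^esub> \<otimes>\<^bsub>free_group r\<^esub> x = x"
    by (simp add: free_group_def reduce_reduced)
next
  fix x assume x: "x \<in> carrier (free_group r)"
  have "reduce (word_inv x) \<in> carrier (free_group r)"
    using x by (intro reduce_in_free_group) (auto simp: free_group_def word_inv_def letter_inv_def)
  moreover have "reduce (word_inv x) \<otimes>\<^bsub>free_group r\<^esub> x = \<one>\<^bsub>free_group r\<^esub>"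
    by (simp add: reduce_reduce_append reduce_word_inv_append)
  ultimately show "\<exists>y\<in>carrier (free_group r). y \<otimes>\<^bsub>free_group r\<^esub> x = \<one>\<^bsub>free_group r\<^esub>" by blast
qed (simp add: free_group_def)

lemma reduce_Cons_mult: "reduce (x # ws) = [x] \<otimes>\<^bsub>free_group r\<^esub> reduce ws"
  using reduce_append_reduce[of "[x]" ws] by simp

lemma reduce_eq_foldr_mult: "reduce ws = foldr (\<otimes>\<^bsub>free_group r\<^esub>) (map (\<lambda>x. [x]) ws) \<one>\<^bsub>free_group r\<^esub>"
proof (induction ws)
  case (Cons x ws)
  then show ?case using reduce_Cons_mult[of x ws r] by (simp del: free_group_mult)
qed (simp add: reduce_def)

lemma inv_free_group_letter:
  assumes "fst x < r"
  shows "inv\<^bsub>free_group r\<^esub> [x] = [letter_inv x]"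
proof (rule group.inv_equality[OF group_free_group])
  show "[letter_inv x] \<otimes>\<^bsub>free_group r\<^esub> [x] = \<one>\<^bsub>free_group r\<^esub>"
    using reduce_word_inv_append[of "[x]"] by (simp add: word_inv_def)
qed (use assms in \<open>simp_all add: letter_in_free_group letter_inv_def\<close>)

lemma (in group) hom_free_group_reduce:
  assumes f: "f \<in> hom (free_group r) G" and ws: "\<forall>x\<in>set ws. fst x < r"
  shows "f (reduce ws) = foldr (\<lambda>x acc. f [x] \<otimes> acc) ws \<one>"
  using ws
proof (induction ws)
  case Nil
  interpret group_hom "free_group r" G f
    using f group_free_group by (simp add: group_hom_def group_hom_axioms_def)
  show ?case using hom_one by (simp add: reduce_def)
next
  case (Cons x ws)
  then have "f (reduce (x # ws)) = f [x] \<otimes> f (reduce ws)"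
    using hom_mult[OF f letter_in_free_group reduce_in_free_group] reduce_Cons_mult[of x ws r]
    by simp
  then show ?case using Cons by simp
qed

lemma (in group) hom_free_group_letter_inv:
  assumes f: "f \<in> hom (free_group r) G" and x: "fst x < r"
  shows "f [letter_inv x] = inv (f [x])"
proof -
  interpret group_hom "free_group r" G f
    using f group_free_group by (simp add: group_hom_def group_hom_axioms_def)
  show ?thesis using hom_inv[OF letter_in_free_group[OF x]] inv_free_group_letter[OF x] by simp
qed

section \<open>The wreath product Z wr Z\<close>

(* A pair (F, l) is the element of Z wr Z = Z^(Z) >< Z with lamp configuration F and cursor
   shift l; finite support of F is imposed only by the carrier. *)
type_synonym wr = "(int \<Rightarrow> int) \<times> int"

definition wr_mult :: "wr \<Rightarrow> wr \<Rightarrow> wr" where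
  "wr_mult p q = (\<lambda>t. fst p t + fst q (t - snd p), snd p + snd q)"

definition wr_one :: wr where
  "wr_one = (\<lambda>_. 0, 0)"

definition wr_inv :: "wr \<Rightarrow> wr" where
  "wr_inv p = (\<lambda>t. - fst p (t + snd p), - snd p)"

definition wreath_ZZ :: "wr monoid" where
  "wreath_ZZ = \<lparr>carrier = {p. finite {t. fst p t \<noteq> 0}}, mult = wr_mult, one = wr_one\<rparr>"

lemma wr_one_simps [simp]: "fst wr_one = (\<lambda>_. 0)" "snd wr_one = 0"
  by (simp_all add: wr_one_def)

lemma wr_mult_assoc: "wr_mult (wr_mult p q) s = wr_mult p (wr_mult q s)"
  by (simp add: wr_mult_def algebra_simps)

lemma wr_mult_one [simp]: "wr_mult wr_one p = p" "wr_mult p wr_one = p"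
  by (simp_all add: wr_mult_def wr_one_def)

lemma wr_mult_inv [simp]: "wr_mult (wr_inv p) p = wr_one" "wr_mult p (wr_inv p) = wr_one"
  by (simp_all add: wr_mult_def wr_inv_def wr_one_def)

lemma wr_mult_base: "wr_mult (X, 0) (Y, 0) = (\<lambda>t. X t + Y t, 0)"
  by (simp add: wr_mult_def)

lemma wr_conj_base: "wr_mult p (wr_mult (X, 0) (wr_inv p)) = (\<lambda>t. X (t - snd p), 0)"
  by (simp add: wr_mult_def wr_inv_def)

lemma finite_support_wr_mult:
  assumes "finite {t. fst p t \<noteq> 0}" "finite {t. fst q t \<noteq> 0}"
  shows "finite {t. fst (wr_mult p q) t \<noteq> 0}"
proof -
  have "{t. fst (wr_mult p q) t \<noteq> 0} \<subseteq> {t. fst p t \<noteq> 0} \<union> (\<lambda>u. u + snd p) ` {t. fst q t \<noteq> 0}"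
    by (auto simp: wr_mult_def image_iff) (metis diff_add_cancel)
  then show ?thesis using assms by (meson finite_UnI finite_imageI finite_subset)
qed

lemma finite_support_wr_inv:
  assumes "finite {t. fst p t \<noteq> 0}"
  shows "finite {t. fst (wr_inv p) t \<noteq> 0}"
proof -
  have "{t. fst (wr_inv p) t \<noteq> 0} = (\<lambda>u. u - snd p) ` {t. fst p t \<noteq> 0}"
    by (auto simp: wr_inv_def image_iff) (metis add_diff_cancel)
  then show ?thesis using assms by simp
qed

lemma group_wreath_ZZ: "group wreath_ZZ"
proof (rule groupI)
  fix x assume "x \<in> carrier wreath_ZZ"
  then show "\<exists>y\<in>carrier wreath_ZZ. y \<otimes>\<^bsub>wreath_ZZ\<^esub> x = \<one>\<^bsub>wreath_ZZ\<^esub>"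
    by (intro bexI[of _ "wr_inv x"]) (simp_all add: wreath_ZZ_def finite_support_wr_inv)
qed (simp_all add: wreath_ZZ_def wr_mult_assoc finite_support_wr_mult)

lemma inv_wreath_ZZ: "p \<in> carrier wreath_ZZ \<Longrightarrow> inv\<^bsub>wreath_ZZ\<^esub> p = wr_inv p"
  by (rule group.inv_equality[OF group_wreath_ZZ])
    (simp_all add: wreath_ZZ_def finite_support_wr_inv)

definition wr_word :: "('a \<Rightarrow> wr) \<Rightarrow> 'a list \<Rightarrow> wr" where
  "wr_word g ws = foldr (\<lambda>x. wr_mult (g x)) ws wr_one"

lemma wr_word_simps [simp]:
  "wr_word g [] = wr_one" "wr_word g (x # ws) = wr_mult (g x) (wr_word g ws)"
  by (simp_all add: wr_word_def)

lemma wr_word_append: "wr_word g (u @ v) = wr_mult (wr_word g u) (wr_word g v)"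
  by (induction u) (simp_all add: wr_mult_assoc)

lemma wr_word_in_wreath_ZZ:
  "(\<And>x. x \<in> set ws \<Longrightarrow> g x \<in> carrier wreath_ZZ) \<Longrightarrow> wr_word g ws \<in> carrier wreath_ZZ"
  by (induction ws) (simp_all add: wreath_ZZ_def finite_support_wr_mult)

lemma hom_free_group_wreath_ZZ:
  assumes "f \<in> hom (free_group r) wreath_ZZ" "\<forall>x\<in>set ws. fst x < r"
  shows "f (reduce ws) = wr_word (\<lambda>x. f [x]) ws"
  using group.hom_free_group_reduce[OF group_wreath_ZZ assms]
  by (simp add: wreath_ZZ_def wr_word_def)

lemma hom_free_group_wreath_ZZ_letter_inv:
  assumes f: "f \<in> hom (free_group r) wreath_ZZ" and x: "fst x < r"
  shows "f [letter_inv x] = wr_inv (f [x])"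
  using group.hom_free_group_letter_inv[OF group_wreath_ZZ f x]
    inv_wreath_ZZ[OF hom_in_carrier[OF f letter_in_free_group[OF x]]] by simp

(* The standard epimorphism: x_0 moves the cursor, x_1 is the lamp at 0, x_i (i > 1) goes to 1. *)
definition lamp_gen :: "nat \<Rightarrow> wr" where
  "lamp_gen i =
    (if i = 0 then (\<lambda>_. 0, 1) else if i = 1 then ((\<lambda>t. if t = 0 then 1 else 0), 0) else wr_one)"

definition lamp_letter :: "nat \<times> bool \<Rightarrow> wr" where
  "lamp_letter x = (if snd x then lamp_gen (fst x) else wr_inv (lamp_gen (fst x)))"

lemma lamp_letter_in_wreath_ZZ: "lamp_letter x \<in> carrier wreath_ZZ"
  by (simp add: lamp_letter_def lamp_gen_def wreath_ZZ_def wr_one_def finite_support_wr_inv)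

lemma wr_word_lamp_push:
  "wr_word lamp_letter (push x w) = wr_mult (lamp_letter x) (wr_word lamp_letter w)"
proof (cases w)
  case (Cons y ys)
  show ?thesis
  proof (cases "cancels x y")
    case True
    then have "wr_mult (lamp_letter x) (lamp_letter y) = wr_one"
      by (auto simp: cancels_def lamp_letter_def)
    then show ?thesis using True Cons by (simp add: push_def flip: wr_mult_assoc)
  qed (simp add: push_def Cons)
qed (simp add: push_def)

lemma wr_word_lamp_reduce: "wr_word lamp_letter (reduce w) = wr_word lamp_letter w"
proof -
  have "wr_word lamp_letter (foldr push w acc)
      = wr_mult (wr_word lamp_letter w) (wr_word lamp_letter acc)" for acc
    by (induction w) (simp_all add: wr_word_lamp_push wr_mult_assoc)
  then show ?thesis by (simp add: reduce_def)
qed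

lemma lamp_hom: "wr_word lamp_letter \<in> hom (free_group r) wreath_ZZ"
  by (rule homI) (simp_all add: wr_word_in_wreath_ZZ lamp_letter_in_wreath_ZZ wr_word_lamp_reduce
      wr_word_append, simp add: wreath_ZZ_def)

section \<open>Sums of translates\<close>

(* translate_sum es l \<delta> t = (\<Sum>j < length es with es!j. \<delta> (t - (j + 1) * l)) *)
fun translate_sum :: "bool list \<Rightarrow> int \<Rightarrow> (int \<Rightarrow> int) \<Rightarrow> int \<Rightarrow> int" where
  "translate_sum [] l \<delta> t = 0"
| "translate_sum (e # es) l \<delta> t = (if e then \<delta> (t - l) else 0) + translate_sum es l \<delta> (t - l)"

lemma translate_sum_zero_fun [simp]: "translate_sum es l (\<lambda>_. 0) t = 0"
  by (induction es arbitrary: t) simp_all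

lemma translate_sum_shift: "translate_sum es l (\<lambda>s. \<delta> (s + k)) t = translate_sum es l \<delta> (t + k)"
  by (induction es arbitrary: t) (simp_all add: algebra_simps)

lemma translate_sum_snoc:
  "translate_sum (es @ [e]) l \<delta> t
    = translate_sum es l \<delta> t + (if e then \<delta> (t - (int (length es) + 1) * l) else 0)"
  by (induction es arbitrary: t) (simp_all add: algebra_simps)

lemma translate_sum_neg:
  "translate_sum es (- l) \<delta> t = translate_sum (rev es) l (\<lambda>s. \<delta> (s + (int (length es) + 1) * l)) t"
proof (induction es arbitrary: t)
  case (Cons e es)
  have "translate_sum (rev es) l (\<lambda>s. \<delta> (s + (int (length es) + 2) * l)) t
      = translate_sum (rev es) l (\<lambda>s. \<delta> (s + (int (length es) + 1) * l)) (t + l)"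
    using translate_sum_shift[of "rev es" l "\<lambda>s. \<delta> (s + (int (length es) + 1) * l)" l t]
    by (simp add: algebra_simps)
  then show ?case using Cons.IH[of "t + l"] by (simp add: translate_sum_snoc algebra_simps)
qed simp

lemma translate_sum_zero_step: "translate_sum es 0 \<delta> t = int (length (filter id es)) * \<delta> t"
  by (induction es) (simp_all add: algebra_simps)

lemma translate_sum_below:
  "0 < l \<Longrightarrow> \<forall>s<d. \<delta> s = 0 \<Longrightarrow> t < l + d \<Longrightarrow> translate_sum es l \<delta> t = 0"
  by (induction es arbitrary: t) auto

lemma translate_sum_lowest:
  "0 < l \<Longrightarrow> \<forall>s<d. \<delta> s = 0 \<Longrightarrow> translate_sum (True # es) l \<delta> (l + d) = \<delta> d"
  using translate_sum_below[of l d \<delta> d es] by simp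

lemma translate_sum_above:
  "0 < l \<Longrightarrow> \<forall>s>d. \<delta> s = 0 \<Longrightarrow> int (length es) * l + d < t \<Longrightarrow> translate_sum es l \<delta> t = 0"
proof (induction es arbitrary: t)
  case (Cons e es)
  have "0 \<le> int (length es) * l" using Cons.prems(1) by simp
  then have "\<delta> (t - l) = 0" using Cons.prems(2,3) by (simp add: algebra_simps)
  moreover have "translate_sum es l \<delta> (t - l) = 0" using Cons by (simp add: algebra_simps)
  ultimately show ?case by simp
qed simp

lemma translate_sum_highest:
  assumes "0 < l" "\<forall>s>d. \<delta> s = 0" "es \<noteq> []" "last es"
  shows "translate_sum es l \<delta> (int (length es) * l + d) = \<delta> d"
  using assms(3,4)
proof (induction es)
  case (Cons e es)
  show ?case
  proof (cases "es = []")
    case False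
    then have "d < int (length es) * l + d" using assms(1) by simp
    then show ?thesis using False Cons assms(2) by (simp add: algebra_simps)
  qed (use Cons.prems in simp)
qed simp

lemma translate_sum_inj:
  assumes l: "0 < l" and d: "\<delta> d \<noteq> 0" "\<forall>s<d. \<delta> s = 0"
    and "length es = length es'" and "translate_sum es l \<delta> = translate_sum es' l \<delta>"
  shows "es = es'"
  using assms(4,5)
proof (induction es arbitrary: es')
  case (Cons e es)
  then obtain e' es'' where es': "es' = e' # es''" by (cases es') auto
  have "translate_sum es l \<delta> d = 0" "translate_sum es'' l \<delta> d = 0"
    using translate_sum_below[OF l d(2)] l by auto
  then have "e = e'"
    using fun_cong[OF Cons.prems(2), of "l + d"] d(1) es' by (auto split: if_splits)
  then have "translate_sum es l \<delta> (s + l - l) = translate_sum es'' l \<delta> (s + l - l)" for s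
    using fun_cong[OF Cons.prems(2), of "s + l"] es' by simp
  then have "translate_sum es l \<delta> = translate_sum es'' l \<delta>" by auto
  then show ?case using Cons.IH Cons.prems(1) es' \<open>e = e'\<close> by simp
qed simp

definition dipole :: "int \<Rightarrow> int" where
  "dipole t = (if t = 1 then 1 else if t = 0 then -1 else 0)"

lemma finite_support_extremes:
  fixes \<delta> :: "int \<Rightarrow> int"
  assumes fin: "finite {t. \<delta> t \<noteq> 0}" and "\<delta> t0 \<noteq> 0"
  obtains d0 d1 where "\<delta> d0 \<noteq> 0" "\<delta> d1 \<noteq> 0" "\<forall>s<d0. \<delta> s = 0" "\<forall>s>d1. \<delta> s = 0"
proof (rule that)
  have ne: "{t. \<delta> t \<noteq> 0} \<noteq> {}" using assms(2) by blast
  show "\<delta> (Min {t. \<delta> t \<noteq> 0}) \<noteq> 0" using Min_in[OF fin ne] by simp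
  show "\<delta> (Max {t. \<delta> t \<noteq> 0}) \<noteq> 0" using Max_in[OF fin ne] by simp
  show "\<forall>s<Min {t. \<delta> t \<noteq> 0}. \<delta> s = 0" using Min_le[OF fin] by (meson mem_Collect_eq not_le)
  show "\<forall>s>Max {t. \<delta> t \<noteq> 0}. \<delta> s = 0" using Max_ge[OF fin] by (meson mem_Collect_eq not_le)
qed

lemma translate_sum_dipole_ends:
  assumes "es \<noteq> []" "hd es" "last es"
  shows "translate_sum es 1 dipole 1 = -1" "\<forall>t<1. translate_sum es 1 dipole t = 0"
    and "translate_sum es 1 dipole (int (length es) + 1) = 1"
    and "\<forall>t>int (length es) + 1. translate_sum es 1 dipole t = 0"
proof -
  have dipole: "dipole 0 = -1" "dipole 1 = 1" "\<forall>s<0. dipole s = 0" "\<forall>s>1. dipole s = 0"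
    by (simp_all add: dipole_def)
  obtain es1 where "es = True # es1" using assms(1,2) by (cases es) auto
  then show "translate_sum es 1 dipole 1 = -1"
    using translate_sum_lowest[of 1 0 dipole es1] dipole by simp
  show "\<forall>t<1. translate_sum es 1 dipole t = 0"
    using translate_sum_below[of 1 0 dipole _ es] dipole(3) by simp
  show "translate_sum es 1 dipole (int (length es) + 1) = 1"
    using translate_sum_highest[of 1 1 dipole es] dipole(2,4) assms(1,3) by simp
  show "\<forall>t>int (length es) + 1. translate_sum es 1 dipole t = 0"
    using translate_sum_above[of 1 1 dipole es] dipole(4) by simp
qed

lemma translate_sum_eq_dipole_pos:
  assumes eq: "translate_sum es l \<delta> = translate_sum es' 1 dipole"
    and l: "0 < l" and fin: "finite {t. \<delta> t \<noteq> 0}"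
    and len: "length es' = length es" "2 \<le> length es"
    and ends: "hd es" "last es" "hd es'" "last es'"
  shows "es' = es"
proof -
  define n where "n = int (length es)"
  have n: "2 \<le> n" using len(2) by (simp add: n_def)
  obtain es1 where es: "es = True # es1" using len ends(1) by (cases es) auto
  have "es' \<noteq> []" using len by auto
  note rhs = translate_sum_dipole_ends[OF this ends(3,4), folded eq, unfolded len, folded n_def]
  have "\<delta> \<noteq> (\<lambda>_. 0)" using rhs(1) by auto
  then obtain d0 d1 where d: "\<delta> d0 \<noteq> 0" "\<delta> d1 \<noteq> 0" "\<forall>s<d0. \<delta> s = 0" "\<forall>s>d1. \<delta> s = 0"
    using finite_support_extremes[OF fin] by blast
  have low_at: "translate_sum es l \<delta> (l + d0) = \<delta> d0"
    using translate_sum_lowest[OF l d(3)] es by simp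
  have low_below: "translate_sum es l \<delta> t = 0" if "t < l + d0" for t
    using translate_sum_below[OF l d(3) that] .
  have "\<not> l + d0 < 1" using rhs(2) low_at d(1) by force
  moreover have "\<not> 1 < l + d0" using low_below rhs(1) by force
  ultimately have d0: "d0 = 1 - l" and "\<delta> d0 = -1" using low_at rhs(1) by auto
  have high_at: "translate_sum es l \<delta> (n * l + d1) = \<delta> d1"
    using translate_sum_highest[OF l d(4), of es] es ends(2) n_def by simp
  have high_above: "translate_sum es l \<delta> t = 0" if "n * l + d1 < t" for t
    using translate_sum_above[OF l d(4)] that n_def by simp
  have "\<not> n * l + d1 < n + 1" using high_above rhs(3) by force
  moreover have "\<not> n + 1 < n * l + d1" using rhs(4) high_at d(2) by force
  ultimately have "n * l + d1 = n + 1" by linarith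
  then have d1: "d1 = n + 1 - n * l" and "\<delta> d1 = 1" using high_at rhs(3) by (simp, metis)
  have "\<not> d1 < d0" using d(3) \<open>\<delta> d1 = 1\<close> by force
  moreover have "d0 \<noteq> d1" using \<open>\<delta> d0 = -1\<close> \<open>\<delta> d1 = 1\<close> by auto
  ultimately have "d0 < d1" by linarith
  have "l = 1"
  proof (rule ccontr)
    assume "l \<noteq> 1"
    then have "(n - 1) * 2 \<le> (n - 1) * l" using l n by (intro mult_left_mono) auto
    then show False using \<open>d0 < d1\<close> d0 d1 n by (simp add: algebra_simps)
  qed
  have "\<delta> = dipole"
  proof
    fix t :: int
    consider "t < 0" | "t = 0" | "t = 1" | "1 < t" by linarith
    then show "\<delta> t = dipole t"
      using d(3,4) d0 d1 \<open>l = 1\<close> \<open>\<delta> d0 = -1\<close> \<open>\<delta> d1 = 1\<close> by cases (auto simp: dipole_def)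
  qed
  then show ?thesis
    using translate_sum_inj[of 1 dipole 0 es es'] eq len \<open>l = 1\<close> by (simp add: dipole_def)
qed

lemma translate_sum_eq_dipole:
  assumes eq: "translate_sum es l \<delta> = translate_sum es' 1 dipole"
    and fin: "finite {t. \<delta> t \<noteq> 0}"
    and len: "length es' = length es" "2 \<le> length es"
    and ends: "hd es" "last es" "hd es'" "last es'"
  shows "es' = es \<or> es' = rev es"
proof -
  consider "l = 0" | "0 < l" | "l < 0" by linarith
  then show ?thesis
  proof cases
    case 1
    obtain es1 where es: "es = True # es1" using len ends(1) by (cases es) auto
    have "True \<in> set es1" using es len(2) ends(2) by (cases es1 rule: rev_cases) auto
    then have "filter id es1 \<noteq> []" by (auto simp: filter_empty_conv)
    then have k: "2 \<le> length (filter id es)" using es by (cases "filter id es1") auto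
    have "es' \<noteq> []" using len by auto
    then have "translate_sum es' 1 dipole 1 = -1"
      using translate_sum_dipole_ends(1) ends(3,4) by blast
    then have "int (length (filter id es)) * \<delta> 1 = - 1"
      using eq translate_sum_zero_step[of es \<delta> 1] 1 by simp
    then have "int (length (filter id es)) dvd 1" by (metis dvd_minus_iff dvd_triv_left)
    then show ?thesis using k zdvd_imp_le by fastforce
  next
    case 2
    then show ?thesis using translate_sum_eq_dipole_pos[OF eq _ fin len ends] by simp
  next
    case 3
    define \<delta>' where "\<delta>' s = \<delta> (s + (int (length es) + 1) * - l)" for s
    have "translate_sum (rev es) (- l) \<delta>' = translate_sum es' 1 dipole"
      using translate_sum_neg[of es "- l" \<delta>] eq unfolding \<delta>'_def by auto
    moreover have "finite ((\<lambda>s. s + (int (length es) + 1) * - l) -` {t. \<delta> t \<noteq> 0})"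
      using fin by (rule finite_vimageI) (simp add: inj_on_def)
    then have "finite {s. \<delta>' s \<noteq> 0}" by (simp add: \<delta>'_def vimage_def)
    ultimately have "es' = rev es"
      using translate_sum_eq_dipole_pos[of "rev es" "- l" \<delta>' es'] 3 len ends
      by (simp add: hd_rev last_rev)
    then show ?thesis ..
  qed
qed

abbreviation ltr_a :: "nat \<times> bool" where "ltr_a \<equiv> (0, True)"
abbreviation ltr_a' :: "nat \<times> bool" where "ltr_a' \<equiv> (0, False)"
abbreviation ltr_b :: "nat \<times> bool" where "ltr_b \<equiv> (1, True)"
abbreviation ltr_b' :: "nat \<times> bool" where "ltr_b' \<equiv> (1, False)"

definition comm_ab :: fg_word where
  "comm_ab = [ltr_a, ltr_b, ltr_a', ltr_b']"

(* code_word es = a c^(e_1) a c^(e_2) ... a c^(e_n) a^(-n), where c = [a, b]; as a group element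
   it is the product over j of the conjugates a^(j+1) c^(e_j) a^(-(j+1)). *)
primrec code_word :: "bool list \<Rightarrow> fg_word" where
  "code_word [] = []"
| "code_word (e # es) = ltr_a # (if e then comm_ab else []) @ code_word es @ [ltr_a']"

lemma set_code_word: "set (code_word es) \<subseteq> {ltr_a, ltr_a', ltr_b, ltr_b'}"
  by (induction es) (auto simp: comm_ab_def)

lemma length_code_word: "length (code_word es) \<le> 6 * length es"
  by (induction es) (auto simp: comm_ab_def)

lemma wr_word_code_word:
  assumes inv: "g ltr_a' = wr_inv (g ltr_a)" "g ltr_b' = wr_inv (g ltr_b)"
  shows "wr_word g (code_word es) = (translate_sum es (snd (g ltr_a)) (fst (wr_word g comm_ab)), 0)"
proof -
  have "snd (wr_word g comm_ab) = 0" using inv by (simp add: comm_ab_def wr_mult_def wr_inv_def)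
  then obtain \<delta> where c: "wr_word g comm_ab = (\<delta>, 0)" by (metis prod.collapse)
  show ?thesis
  proof (induction es)
    case (Cons e es)
    have "wr_mult (wr_word g (if e then comm_ab else [])) (wr_word g (code_word es))
        = (\<lambda>t. (if e then \<delta> t else 0) + translate_sum es (snd (g ltr_a)) \<delta> t, 0)"
      using Cons.IH c by (simp add: wr_mult_base)
    then have "wr_word g (code_word (e # es))
        = wr_mult (g ltr_a)
            (wr_mult (\<lambda>t. (if e then \<delta> t else 0) + translate_sum es (snd (g ltr_a)) \<delta> t, 0)
              (wr_inv (g ltr_a)))"
      using inv(1) by (simp add: wr_word_append flip: wr_mult_assoc)
    then show ?case using c by (simp add: wr_conj_base)
  qed (simp add: wr_one_def)
qed

lemma hom_code_word:
  assumes f: "f \<in> hom (free_group r) wreath_ZZ" and r: "2 \<le> r"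
  shows "f (reduce (code_word es))
    = (translate_sum es (snd (f [ltr_a])) (fst (f (reduce comm_ab))), 0)"
proof -
  have inv: "f [ltr_a'] = wr_inv (f [ltr_a])" "f [ltr_b'] = wr_inv (f [ltr_b])"
    using hom_free_group_wreath_ZZ_letter_inv[OF f, of ltr_a]
      hom_free_group_wreath_ZZ_letter_inv[OF f, of ltr_b] r
    by (simp_all add: letter_inv_def)
  have "f (reduce comm_ab) = wr_word (\<lambda>x. f [x]) comm_ab"
    using hom_free_group_wreath_ZZ[OF f] r by (simp add: comm_ab_def)
  moreover have "f (reduce (code_word es)) = wr_word (\<lambda>x. f [x]) (code_word es)"
    using hom_free_group_wreath_ZZ[OF f] set_code_word[of es] r by force
  ultimately show ?thesis using wr_word_code_word[of "\<lambda>x. f [x]", OF inv] by simp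
qed

lemma lamp_code_word: "wr_word lamp_letter (reduce (code_word es)) = (translate_sum es 1 dipole, 0)"
proof -
  have "fst (wr_word lamp_letter comm_ab) = dipole"
    by (auto simp: fun_eq_iff comm_ab_def lamp_letter_def lamp_gen_def wr_mult_def wr_inv_def
        dipole_def)
  then show ?thesis
    using wr_word_code_word[of lamp_letter es]
    by (simp add: wr_word_lamp_reduce lamp_letter_def lamp_gen_def)
qed

(* Framed strings start and end with True, and the second letter distinguishes a framed string
   from the reverse of one, which rules out the reflected case of translate_sum_eq_dipole. *)
definition frame :: "bool list \<Rightarrow> bool list" where
  "frame xs = True # True # xs @ [False, True]"

lemma length_frame: "length (frame xs) = length xs + 4"
  by (simp add: frame_def)

lemma aut_orbit_code_frame_inj:
  assumes r: "2 \<le> r" and len: "length xs = length ys"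
    and orb: "aut_orbit (free_group r) (reduce (code_word (frame xs)))
      = aut_orbit (free_group r) (reduce (code_word (frame ys)))"
  shows "xs = ys"
proof -
  have "reduce (code_word (frame ys)) \<in> aut_orbit (free_group r) (reduce (code_word (frame xs)))"
    using group.aut_orbit_self[OF group_free_group] orb by simp
  then obtain \<phi> where \<phi>: "\<phi> \<in> iso (free_group r) (free_group r)"
    "reduce (code_word (frame ys)) = \<phi> (reduce (code_word (frame xs)))"
    unfolding aut_orbit_def by blast
  define f where "f = wr_word lamp_letter \<circ> \<phi>"
  have f: "f \<in> hom (free_group r) wreath_ZZ"
    unfolding f_def by (rule hom_compose[OF iso_imp_homomorphism[OF \<phi>(1)] lamp_hom])
  have "translate_sum (frame xs) (snd (f [ltr_a])) (fst (f (reduce comm_ab)))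
      = translate_sum (frame ys) 1 dipole"
    using hom_code_word[OF f r, of "frame xs"] lamp_code_word[of "frame ys"] \<phi>(2)
    by (simp add: f_def)
  moreover have "finite {t. fst (f (reduce comm_ab)) t \<noteq> 0}"
    using hom_in_carrier[OF f reduce_in_free_group, of comm_ab] r
    by (simp add: wreath_ZZ_def comm_ab_def)
  ultimately have "frame ys = frame xs \<or> frame ys = rev (frame xs)"
    by (rule translate_sum_eq_dipole) (use len in \<open>simp_all add: frame_def\<close>)
  then show ?thesis by (auto simp: frame_def)
qed

lemma word_length_code_word_le:
  assumes r: "2 \<le> r" and S: "S \<subseteq> carrier (free_group r)"
    and gen: "generate (free_group r) S = carrier (free_group r)"
  shows "word_length (free_group r) S (reduce (code_word es))
    \<le> Max (word_length (free_group r) S ` {[ltr_a], [ltr_a'], [ltr_b], [ltr_b']}) * (6 * length es)"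
    (is "?wl (reduce (code_word es)) \<le> ?M * _")
proof -
  interpret F: group "free_group r" by (rule group_free_group)
  have "\<forall>x\<in>set (code_word es). fst x < r" using set_code_word[of es] r by auto
  then have letters: "set (map (\<lambda>x. [x]) (code_word es)) \<subseteq> generate (free_group r) S"
    using gen letter_in_free_group by auto
  have "?wl (reduce (code_word es)) \<le> sum_list (map ?wl (map (\<lambda>x. [x]) (code_word es)))"
    unfolding reduce_eq_foldr_mult[of _ r] using S letters by (rule F.word_length_foldr_le)
  also have "\<dots> \<le> sum_list (map (\<lambda>_. ?M) (code_word es))"
    unfolding map_map using set_code_word[of es] by (intro sum_list_mono) (auto intro!: Max_ge)
  also have "\<dots> \<le> ?M * (6 * length es)"
    using length_code_word[of es] by (simp add: sum_list_triv)
  finally show ?thesis .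
qed

lemma aut_growth_free_group_lower_bound:
  assumes r: "2 \<le> r" and fin: "finite S" and S: "S \<subseteq> carrier (free_group r)"
    and gen: "generate (free_group r) S = carrier (free_group r)"
  shows "\<exists>k. \<forall>n L. k * (n + 1) \<le> L \<longrightarrow> 2 ^ n \<le> aut_growth (free_group r) S L"
proof -
  interpret F: group "free_group r" by (rule group_free_group)
  let ?wl = "word_length (free_group r) S"
  define M where "M = Max (?wl ` {[ltr_a], [ltr_a'], [ltr_b], [ltr_b']})"
  note short = word_length_code_word_le[OF r S gen, folded M_def]
  show ?thesis
  proof (intro exI allI impI)
    fix n L assume L: "24 * M * (n + 1) \<le> L"
    let ?orb = "\<lambda>xs. aut_orbit (free_group r) (reduce (code_word (frame xs)))"
    let ?B = "{Orb \<in> aut_orbit (free_group r) ` carrier (free_group r). \<exists>g\<in>Orb. ?wl g \<le> L}"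
    have "inj_on ?orb {xs. length xs = n}"
      using aut_orbit_code_frame_inj[OF r] by (auto intro!: inj_onI)
    moreover have "?orb ` {xs. length xs = n} \<subseteq> ?B"
    proof (rule image_subsetI)
      fix xs :: "bool list" assume "xs \<in> {xs. length xs = n}"
      then have "n = length xs" by simp
      have "?wl (reduce (code_word (frame xs))) \<le> M * (6 * (n + 4))"
        using short[of "frame xs"] \<open>n = length xs\<close> by (simp add: length_frame)
      also have "\<dots> \<le> M * (24 * (n + 1))" by (intro mult_le_mono2) simp
      also have "\<dots> \<le> L" using L by (simp add: ac_simps)
      finally have "?wl (reduce (code_word (frame xs))) \<le> L" .
      moreover have "reduce (code_word (frame xs)) \<in> carrier (free_group r)"
        using set_code_word[of "frame xs"] r by (intro reduce_in_free_group) auto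
      ultimately show "?orb xs \<in> ?B" using F.aut_orbit_self by blast
    qed
    ultimately have "card {xs :: bool list. length xs = n} \<le> card ?B"
      using F.finite_aut_orbits_in_ball[OF fin S gen] by (rule card_inj_on_le)
    then show "2 ^ n \<le> aut_growth (free_group r) S L"
      using card_lists_length_eq[of "UNIV :: bool set" n] unfolding aut_growth_def by simp
  qed
qed

theorem mainTheorem4:
  fixes r :: nat and S :: "fg_word set"
  assumes "r \<ge> 2"
    and "finite S" and "S \<subseteq> carrier (free_group r)"
    and "generate (free_group r) S = carrier (free_group r)"
  shows "aut_growth (free_group r) S \<sim>\<^sub>g (\<lambda>n. 2 ^ n)"
proof -
  interpret F: group "free_group r" by (rule group_free_group)
  have "aut_growth (free_group r) S \<preccurlyeq>\<^sub>g (\<lambda>n. 2 ^ n)"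
    using F.aut_growth_le_power[OF assms(2-4)] by (rule growth_le_exp_if_le_power)
  moreover obtain k where "\<forall>n L. k * (n + 1) \<le> L \<longrightarrow> 2 ^ n \<le> aut_growth (free_group r) S L"
    using aut_growth_free_group_lower_bound[OF assms] by blast
  then have "(\<lambda>n. 2 ^ n) \<preccurlyeq>\<^sub>g aut_growth (free_group r) S"
    by (intro exp_growth_le_if) blast
  ultimately show ?thesis by (simp add: growth_equiv_def)
qed

end
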